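(* Let $M\in\mathbb{N}$ and $t\ge 0$. Let $\nu\in\mathbb{C}\setminus\{0\}$ with $\mathrm{Re}(\nu)>0$, let $\delta_1,\dots,\delta_M\in\mathbb{C}\setminus\{0\}$ with $\mathrm{Re}(\delta_i)>0$, and let $\eta_1,\dots,\eta_M\in\mathbb{C}$ be pairwise distinct. Then $$\Bigl(x^{\delta_1-1}E_{\nu,\delta_1}(\eta_1x^\nu)\ast\cdots\ast x^{\delta_M-1}E_{\nu,\delta_M}(\eta_Mx^\nu)\Bigr)(t)=t^{\sum_{h=1}^M\delta_h-1}\sum_{i=1}^M\frac{\eta_i^{M-1}}{\prod_{j=1,\,j\neq i}^M(\eta_i-\eta_j)}\,E_{\nu,\sum_{h=1}^M\delta_h}\bigl(\eta_it^\nu\bigr),$$ where the convolution is performed with respect to the variable $x\ge0$.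
   Context: The two-parameter Mittag-Leffler function is $E_{\nu,\delta}(x)=\sum_{k=0}^\infty\frac{x^k}{\Gamma(\nu k+\delta)}$. The convolution of functions on $[0,\infty)$ is $(f\ast g)(t)=\int_0^t f(t-x)g(x)\,dx$. An empty product equals $1$. *)

theory Defs
  imports "HOL-Analysis.Analysis"
begin

definition mittag_leffler :: "complex \<Rightarrow> complex \<Rightarrow> complex \<Rightarrow> complex" where
  "mittag_leffler \<nu> \<delta> z = (\<Sum>k. z ^ k / Gamma (\<nu> * of_nat k + \<delta>))"

definition conv :: "(real \<Rightarrow> complex) \<Rightarrow> (real \<Rightarrow> complex) \<Rightarrow> real \<Rightarrow> complex" where
  "conv f g t = integral {0..t} (\<lambda>x. f (t - x) * g x)"

fun conv_iter :: "(nat \<Rightarrow> real \<Rightarrow> complex) \<Rightarrow> nat \<Rightarrow> real \<Rightarrow> complex" where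
  "conv_iter F 0 = (\<lambda>t. 0)"
| "conv_iter F (Suc 0) = F 1"
| "conv_iter F (Suc (Suc n)) = conv (conv_iter F (Suc n)) (F (Suc (Suc n)))"

end

(*
  For a geometrically bounded sequence c put k[d, c](x) = sum_n c_n x^(nu n + d - 1) / Gamma (nu n + d),
  so that x^(delta - 1) E_{nu,delta}(eta x^nu) = k[delta, (eta^n)_n](x). Euler's Beta integral, proved
  here for complex parameters by Fubini, says that x^(a-1) / Gamma a convolved with x^(b-1) / Gamma b
  is x^(a+b-1) / Gamma (a+b). Integrating termwise, which |Beta a b| <= Beta (Re a) (Re b) justifies,
  the convolution of k[d1, c] and k[d2, c'] is k[d1 + d2, Cauchy product of c and c']. Hence the
  M-fold convolution is k[sum_i delta_i, h], where h_n is the n-th coefficient of the power series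
  prod_i 1 / (1 - eta_i X). For distinct eta_i, partial fractions give
  h_n = sum_i eta_i^(n+M-1) / prod_{j<>i} (eta_i - eta_j), and splitting the series accordingly
  yields the M Mittag-Leffler functions on the right-hand side.
*)
theory Submission
  imports Defs "HOL-Complex_Analysis.Cauchy_Integral_Theorem" "HOL-Real_Asymp.Real_Asymp"
begin

section \<open>Euler's Beta integral for complex parameters\<close>

lemma Gamma_nonzero_Re_pos: "Re z > 0 \<Longrightarrow> Gamma z \<noteq> (0::complex)"
  by (auto simp: Gamma_eq_zero_iff elim!: nonpos_Ints_cases)

lemma lborel_translate:
  fixes g :: "real \<Rightarrow> 'a::{banach, second_countable_topology}"
  shows "(\<integral>u. g (u - t) \<partial>lborel) = (\<integral>u. g u \<partial>lborel)"
    and "integrable lborel (\<lambda>u. g (u - t)) \<longleftrightarrow> integrable lborel g"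
  using lborel_integral_real_affine[of 1 g "-t"] lborel_integrable_real_affine_iff[of 1 g "-t"]
  by simp_all

definition Gamma_density :: "complex \<Rightarrow> real \<Rightarrow> complex" where
  "Gamma_density a t = (if 0 < t then of_real t powr (a - 1) * of_real (exp (- t)) else 0)"

lemma Gamma_density_measurable [measurable]: "Gamma_density a \<in> borel_measurable borel"
  unfolding Gamma_density_def by measurable

lemma Gamma_density_integrable:
  assumes "Re a > 0"
  shows "integrable lborel (Gamma_density a)"
    and "(\<integral>t. Gamma_density a t \<partial>lborel) = Gamma a"
proof -
  have density_eq: "Gamma_density a =
      (\<lambda>t. indicator {0<..} t *\<^sub>R (of_real t powr (a - 1) / of_real (exp t)))"
    by (auto simp: Gamma_density_def fun_eq_iff indicator_def exp_minus field_simps)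
  have "set_integrable lebesgue {0<..} (\<lambda>t. of_real t powr (a - 1) / of_real (exp t))"
    using absolutely_integrable_Gamma_integral'[OF assms] .
  hence "integrable lebesgue (Gamma_density a)"
    by (simp add: set_integrable_def density_eq)
  thus "integrable lborel (Gamma_density a)"
    by (subst (asm) integrable_completion) auto
  hence "set_integrable lborel {0<..} (\<lambda>t. of_real t powr (a - 1) / of_real (exp t))"
    by (simp add: set_integrable_def density_eq)
  from set_borel_integral_eq_integral(2)[OF this]
  have "(\<integral>t. Gamma_density a t \<partial>lborel) =
          integral {0<..} (\<lambda>t. of_real t powr (a - 1) / of_real (exp t))"
    by (simp add: set_lebesgue_integral_def density_eq)
  also have "\<dots> = Gamma a"
    using Gamma_integral_complex'[OF assms] by (simp add: integral_unique)
  finally show "(\<integral>t. Gamma_density a t \<partial>lborel) = Gamma a" .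
qed

definition beta_kernel :: "complex \<Rightarrow> complex \<Rightarrow> real \<Rightarrow> real \<Rightarrow> complex" where
  "beta_kernel a b u x =
     indicator {0<..<u} x *\<^sub>R (of_real (u - x) powr (a - 1) * of_real x powr (b - 1))"

lemma beta_kernel_measurable [measurable]: "beta_kernel a b u \<in> borel_measurable borel"
  unfolding beta_kernel_def by measurable

lemma beta_kernel_scale:
  assumes "u > 0"
  shows "beta_kernel a b u (u * x) = of_real u powr (a + b - 2) * beta_kernel a b 1 x"
proof (cases "0 < x \<and> x < 1")
  case True
  have "of_real (u - u * x) = (of_real u * of_real (1 - x) :: complex)"
    by (simp add: algebra_simps)
  hence "(of_real (u - u * x) :: complex) powr (a - 1) =
           of_real u powr (a - 1) * of_real (1 - x) powr (a - 1)"
    using True assms by (simp add: powr_times_real)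
  moreover have "(of_real (u * x) :: complex) powr (b - 1) =
                   of_real u powr (b - 1) * of_real x powr (b - 1)"
    using True assms by (simp add: powr_times_real)
  moreover have "(of_real u :: complex) powr (a - 1) * of_real u powr (b - 1) =
                   of_real u powr (a + b - 2)"
    by (simp add: powr_add[symmetric])
  moreover have "0 < u * x" "u * x < u"
    using True assms by auto
  ultimately show ?thesis
    using True by (simp add: beta_kernel_def mult_ac del: of_real_mult of_real_diff)
next
  case False
  hence "\<not> (0 < u * x \<and> u * x < u)"
    using assms by (auto simp: zero_less_mult_iff)
  thus ?thesis
    using False by (simp add: beta_kernel_def)
qed

lemma beta_kernel_integral_scale:
  assumes "u > 0"
  shows "(\<integral>x. beta_kernel a b u x \<partial>lborel) =
           of_real u powr (a + b - 1) * (\<integral>x. beta_kernel a b 1 x \<partial>lborel)"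
proof -
  have scale: "(\<lambda>x. beta_kernel a b u (0 + u * x)) =
                 (\<lambda>x. of_real u powr (a + b - 2) * beta_kernel a b 1 x)"
    using beta_kernel_scale[OF assms] by simp
  have "(\<integral>x. beta_kernel a b u x \<partial>lborel) =
          \<bar>u\<bar> *\<^sub>R (\<integral>x. beta_kernel a b u (0 + u * x) \<partial>lborel)"
    using assms by (intro lborel_integral_real_affine) simp
  also have "\<dots> = (of_real u * of_real u powr (a + b - 2)) * (\<integral>x. beta_kernel a b 1 x \<partial>lborel)"
    using assms unfolding scale by (simp add: scaleR_conv_of_real)
  also have "of_real u * of_real u powr (a + b - 2) = (of_real u powr (a + b - 1) :: complex)"
    using assms powr_add[of "of_real u :: complex" 1 "a + b - 2"] by simp
  finally show ?thesis .
qed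

lemma Gamma_density_conv:
  "(\<integral>t. Gamma_density a t * Gamma_density b (u - t) \<partial>lborel) =
     Gamma_density (a + b) u * (\<integral>x. beta_kernel b a 1 x \<partial>lborel)"
proof (cases "u > 0")
  case False
  hence "(\<lambda>t. Gamma_density a t * Gamma_density b (u - t)) = (\<lambda>_. 0)"
    and "Gamma_density (a + b) u = 0"
    by (auto simp: Gamma_density_def fun_eq_iff)
  thus ?thesis by simp
next
  case True
  have pointwise:
    "Gamma_density a t * Gamma_density b (u - t) = of_real (exp (- u)) * beta_kernel b a u t" for t
  proof (cases "0 < t \<and> t < u")
    case True
    have "exp (- t) * exp (- (u - t)) = exp (- u)"
      by (simp add: exp_add[symmetric])
    hence "(of_real (exp (- t)) :: complex) * of_real (exp (- (u - t))) = of_real (exp (- u))"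
      by (metis of_real_mult)
    thus ?thesis
      using True unfolding Gamma_density_def beta_kernel_def indicator_def
      by (auto simp: mult_ac simp del: of_real_mult of_real_diff of_real_minus)
  qed (auto simp: Gamma_density_def beta_kernel_def indicator_def)
  have "(\<integral>t. Gamma_density a t * Gamma_density b (u - t) \<partial>lborel) =
          (\<integral>t. of_real (exp (- u)) * beta_kernel b a u t \<partial>lborel)"
    by (intro Bochner_Integration.integral_cong refl pointwise)
  also have "\<dots> = of_real (exp (- u)) * (\<integral>t. beta_kernel b a u t \<partial>lborel)"
    by (rule integral_mult_right_zero)
  also have "\<dots> = Gamma_density (a + b) u * (\<integral>x. beta_kernel b a 1 x \<partial>lborel)"
    using True
    by (simp add: beta_kernel_integral_scale[OF True] Gamma_density_def add.commute[of b a] mult_ac)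
  finally show ?thesis .
qed

text \<open>Fubini on the product of the two Gamma integrals.\<close>
lemma Gamma_mult_Gamma_eq_integral:
  assumes a: "Re a > 0" and b: "Re b > 0"
  shows "Gamma a * Gamma b = Gamma (a + b) * (\<integral>x. beta_kernel b a 1 x \<partial>lborel)"
proof -
  define f where "f t u = Gamma_density a t * Gamma_density b (u - t)" for t u
  note Ga = Gamma_density_integrable[OF a] and Gb = Gamma_density_integrable[OF b]
  have Gb_shift: "integrable lborel (\<lambda>u. Gamma_density b (u - t))" for t
    using Gb(1) lborel_translate(2)[of "Gamma_density b" t] by simp
  have inner: "(\<integral>u. f t u \<partial>lborel) = Gamma_density a t * Gamma b" for t
    using lborel_translate(1)[of "Gamma_density b" t] Gb(2) by (simp add: f_def)
  have inner_norm: "(\<integral>u. norm (f t u) \<partial>lborel) =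
                      norm (Gamma_density a t) * (\<integral>u. norm (Gamma_density b u) \<partial>lborel)" for t
    using lborel_translate(1)[of "\<lambda>u. norm (Gamma_density b u)" t] by (simp add: f_def norm_mult)
  have "integrable (lborel \<Otimes>\<^sub>M lborel) (case_prod f)"
  proof (rule lborel_pair.Fubini_integrable, unfold case_prod_conv)
    show "case_prod f \<in> borel_measurable (lborel \<Otimes>\<^sub>M lborel)"
      unfolding f_def by measurable
    show "integrable lborel (\<lambda>t. \<integral>u. norm (f t u) \<partial>lborel)"
      unfolding inner_norm by (intro integrable_mult_left integrable_norm Ga(1))
    show "AE t in lborel. integrable lborel (\<lambda>u. f t u)"
      by (intro AE_I2) (auto simp: f_def intro!: integrable_mult_right Gb_shift)
  qed
  hence "(\<integral>u. (\<integral>t. f t u \<partial>lborel) \<partial>lborel) = (\<integral>t. (\<integral>u. f t u \<partial>lborel) \<partial>lborel)"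
    by (rule lborel_pair.Fubini_integral)
  also have "\<dots> = Gamma a * Gamma b"
    using Ga(2) by (simp add: inner)
  also have "(\<integral>u. (\<integral>t. f t u \<partial>lborel) \<partial>lborel) =
               Gamma (a + b) * (\<integral>x. beta_kernel b a 1 x \<partial>lborel)"
    using Gamma_density_integrable(2)[of "a + b"] a b by (simp add: f_def Gamma_density_conv)
  finally show ?thesis by simp
qed

lemma norm_beta_kernel:
  "norm (beta_kernel a b u x) = indicator {0<..<u} x * ((u - x) powr (Re a - 1) * x powr (Re b - 1))"
  by (simp add: beta_kernel_def indicator_def norm_mult norm_powr_real_powr del: of_real_diff)

lemma beta_kernel_of_real:
  "beta_kernel (of_real a) (of_real b) u x =
     of_real (indicator {0<..<u} x * ((u - x) powr (a - 1) * x powr (b - 1)))"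
proof -
  have "complex_of_real a - 1 = of_real (a - 1)" "complex_of_real b - 1 = of_real (b - 1)"
    by simp_all
  thus ?thesis
    unfolding beta_kernel_def
    by (auto simp: indicator_def powr_of_real[symmetric] simp del: of_real_diff)
qed

lemma integrable_beta_kernel:
  assumes a: "Re a > 0" and b: "Re b > 0"
  shows "integrable lborel (beta_kernel a b u)"
proof (cases "u > 0")
  case False
  hence "beta_kernel a b u = (\<lambda>_. 0)"
    by (auto simp: beta_kernel_def fun_eq_iff)
  thus ?thesis by simp
next
  case True
  have "integrable lborel (\<lambda>t. indicator {0..1} t *\<^sub>R (t powr (Re b - 1) * (1 - t) powr (Re a - 1)))"
    using integrable_Beta[of "Re b" "Re a"] a b by (simp add: set_integrable_def)
  hence "integrable lborel (beta_kernel a b 1)"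
  proof (rule Bochner_Integration.integrable_bound)
    show "beta_kernel a b 1 \<in> borel_measurable lborel"
      by measurable
    have "norm (beta_kernel a b 1 x) \<le>
            norm (indicator {0..1} x *\<^sub>R (x powr (Re b - 1) * (1 - x) powr (Re a - 1)))" for x
      by (simp add: norm_beta_kernel indicator_def mult.commute)
    thus "AE x in lborel. norm (beta_kernel a b 1 x) \<le>
            norm (indicator {0..1} x *\<^sub>R (x powr (Re b - 1) * (1 - x) powr (Re a - 1)))"
      by simp
  qed
  hence "integrable lborel (\<lambda>x. of_real u powr (a + b - 2) * beta_kernel a b 1 x)"
    by (rule integrable_mult_right)
  hence "integrable lborel (\<lambda>x. beta_kernel a b u (0 + u * x))"
    using beta_kernel_scale[OF True] by simp
  thus ?thesis
    using lborel_integrable_real_affine_iff[of u "beta_kernel a b u" 0] True by simp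
qed

lemma integral_beta_kernel:
  assumes a: "Re a > 0" and b: "Re b > 0" and u: "u > 0"
  shows "(\<integral>x. beta_kernel a b u x \<partial>lborel) = of_real u powr (a + b - 1) * Beta a b"
proof -
  have "Gamma (a + b) \<noteq> 0"
    using a b by (intro Gamma_nonzero_Re_pos) simp
  hence "(\<integral>x. beta_kernel a b 1 x \<partial>lborel) = Beta a b"
    using Gamma_mult_Gamma_eq_integral[OF b a] by (simp add: Beta_def field_simps add.commute)
  thus ?thesis
    using beta_kernel_integral_scale[OF u] by simp
qed

lemma integral_norm_beta_kernel:
  assumes a: "Re a > 0" and b: "Re b > 0" and u: "u > 0"
  shows "(\<integral>x. norm (beta_kernel a b u x) \<partial>lborel) = u powr (Re a + Re b - 1) * Beta (Re a) (Re b)"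
proof -
  let ?a = "complex_of_real (Re a)" and ?b = "complex_of_real (Re b)"
  have "(\<integral>x. norm (beta_kernel a b u x) \<partial>lborel) = (\<integral>x. Re (beta_kernel ?a ?b u x) \<partial>lborel)"
    by (simp add: norm_beta_kernel beta_kernel_of_real)
  also have "\<dots> = Re (\<integral>x. beta_kernel ?a ?b u x \<partial>lborel)"
    using a b by (intro integral_Re integrable_beta_kernel) simp_all
  also have "\<dots> = Re (of_real u powr of_real (Re a + Re b - 1) * of_real (Beta (Re a) (Re b)))"
    using a b u by (simp add: integral_beta_kernel Beta_complex_of_real)
  also have "\<dots> = u powr (Re a + Re b - 1) * Beta (Re a) (Re b)"
    using u powr_of_real[of u "Re a + Re b - 1"] by (simp del: of_real_diff of_real_add)
  finally show ?thesis .
qed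

lemma norm_Beta_le:
  assumes "Re a > 0" and "Re b > 0"
  shows "norm (Beta a b) \<le> Beta (Re a) (Re b)"
  using integral_norm_bound[of lborel "beta_kernel a b 1"]
  by (simp add: integral_beta_kernel integral_norm_beta_kernel assms)

section \<open>Series of Mittag-Leffler type\<close>

text \<open>Log-convexity of \<open>Gamma\<close> on \<open>[x + c - 1, x + c]\<close> together with \<open>Gamma (y + 1) = y Gamma y\<close>.\<close>
lemma Beta_real_le_Gamma_powr:
  fixes x c :: real
  assumes x: "x > 1" and c: "0 < c" "c \<le> 1"
  shows "Beta x c \<le> Gamma c * (x + c - 1) powr (- c)"
proof -
  let ?f = "ln \<circ> Gamma :: real \<Rightarrow> real"
  have "?f ((1 - (1 - c)) *\<^sub>R (x + c - 1) + (1 - c) *\<^sub>R (x + c)) \<le>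
          (1 - (1 - c)) * ?f (x + c - 1) + (1 - c) * ?f (x + c)"
    by (rule convex_onD[OF log_convex_Gamma_real]) (use x c in auto)
  moreover have "(1 - (1 - c)) *\<^sub>R (x + c - 1) + (1 - c) *\<^sub>R (x + c) = x"
    by (simp add: algebra_simps)
  ultimately have convex: "ln (Gamma x) \<le> c * ln (Gamma (x + c - 1)) + (1 - c) * ln (Gamma (x + c))"
    by simp
  have pos: "Gamma (x + c - 1) > 0"
    using x c by (intro Gamma_real_pos) simp
  have "Gamma ((x + c - 1) + 1) = (x + c - 1) * Gamma (x + c - 1)"
    by (rule Gamma_plus1) (use x c in \<open>auto elim!: nonpos_Ints_cases\<close>)
  hence "ln (Gamma (x + c)) = ln (x + c - 1) + ln (Gamma (x + c - 1))"
    using x c pos by (simp add: ln_mult_pos)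
  with convex have "ln (Gamma x) \<le> ln (Gamma (x + c)) - c * ln (x + c - 1)"
    by (simp add: algebra_simps)
  hence "exp (ln (Gamma x)) \<le> exp (ln (Gamma (x + c)) - c * ln (x + c - 1))"
    by simp
  hence "Gamma x \<le> Gamma (x + c) * (x + c - 1) powr (- c)"
    using x c by (simp add: exp_diff powr_def exp_minus divide_inverse)
  thus ?thesis
    using x c by (simp add: Beta_def field_simps)
qed

lemma Beta_real_tendsto_zero:
  fixes c \<alpha> d :: real
  assumes c: "c > 0" and \<alpha>: "\<alpha> > 0"
  shows "(\<lambda>n. Beta (\<alpha> * real n + d) c) \<longlonglongrightarrow> 0"
proof (rule tendsto_sandwich)
  define c' where "c' = min c 1"
  have c': "0 < c'" "c' \<le> 1" "c' \<le> c"
    using c by (auto simp: c'_def)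
  have large: "eventually (\<lambda>n. \<alpha> * real n + d > 1) sequentially"
    using \<alpha> by real_asymp
  show "eventually (\<lambda>n. 0 \<le> Beta (\<alpha> * real n + d) c) sequentially"
    using large by eventually_elim (use c in \<open>auto simp: Beta_def\<close>)
  show "eventually (\<lambda>n. Beta (\<alpha> * real n + d) c \<le> Gamma c' * (\<alpha> * real n + d + c' - 1) powr (- c'))
          sequentially"
    using large
  proof eventually_elim
    case (elim n)
    have "Beta (\<alpha> * real n + d) c \<le> Beta (\<alpha> * real n + d) c'"
      by (rule Beta_real_mono) (use elim c' in auto)
    also have "\<dots> \<le> Gamma c' * (\<alpha> * real n + d + c' - 1) powr (- c')"
      by (rule Beta_real_le_Gamma_powr) (use elim c' in auto)
    finally show ?case .
  qed
  show "(\<lambda>n. Gamma c' * (\<alpha> * real n + d + c' - 1) powr (- c')) \<longlonglongrightarrow> 0"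
    using c' \<alpha> by real_asymp
qed auto

text \<open>Ratio test: \<open>1 / Gamma (a + v) = Beta a v / (Gamma a Gamma v)\<close>, and the Beta factor tends to zero.\<close>
lemma summable_power_div_norm_Gamma:
  fixes v d :: complex and W :: real
  assumes v: "Re v > 0" and d: "Re d > 0" and W: "W \<ge> 0"
  shows "summable (\<lambda>n. W ^ n / norm (Gamma (v * of_nat n + d)))"
proof -
  have Gv: "norm (Gamma v) > 0"
    using Gamma_nonzero_Re_pos[OF v] by simp
  have "(\<lambda>n. W * Beta (Re v * real n + Re d) (Re v) / norm (Gamma v)) \<longlonglongrightarrow> W * 0 / norm (Gamma v)"
    using v Gv by (intro tendsto_intros Beta_real_tendsto_zero) auto
  hence "eventually (\<lambda>n. W * Beta (Re v * real n + Re d) (Re v) / norm (Gamma v) < 1 / 2) sequentially"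
    by (intro order_tendstoD(2)) auto
  then obtain N where N: "\<And>n. n \<ge> N \<Longrightarrow> W * Beta (Re v * real n + Re d) (Re v) / norm (Gamma v) < 1 / 2"
    by (auto simp: eventually_sequentially)
  show ?thesis
  proof (rule summable_ratio_test[of "1 / 2" N])
    fix n assume n: "n \<ge> N"
    define a where "a = v * of_nat n + d"
    have a: "Re a > 0"
      using v d by (simp add: a_def add_nonneg_pos)
    have Ga: "norm (Gamma a) > 0"
      using Gamma_nonzero_Re_pos[OF a] by simp
    have "Gamma (a + v) \<noteq> 0" "Gamma a \<noteq> 0" "Gamma v \<noteq> 0"
      using a v by (auto intro!: Gamma_nonzero_Re_pos)
    moreover have "v * of_nat (Suc n) + d = a + v"
      by (simp add: a_def algebra_simps)
    ultimately have Gamma_step: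
      "norm (Gamma (v * of_nat (Suc n) + d)) = norm (Gamma a) * norm (Gamma v) / norm (Beta a v)"
      by (simp add: Beta_def norm_divide norm_mult)
    have "norm (Beta a v) \<le> Beta (Re v * real n + Re d) (Re v)"
      using norm_Beta_le[OF a v] by (simp add: a_def)
    hence "W ^ Suc n / norm (Gamma (v * of_nat (Suc n) + d)) \<le>
             (W * Beta (Re v * real n + Re d) (Re v) / norm (Gamma v)) * (W ^ n / norm (Gamma a))"
      unfolding Gamma_step using W Ga Gv
      by (simp add: field_simps mult_left_mono)
    also have "\<dots> \<le> 1 / 2 * (W ^ n / norm (Gamma a))"
      using N[OF n] W Ga by (intro mult_right_mono) auto
    finally show "norm (W ^ Suc n / norm (Gamma (v * of_nat (Suc n) + d))) \<le>
                    1 / 2 * norm (W ^ n / norm (Gamma (v * of_nat n + d)))"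
      using W by (simp add: a_def)
  qed simp
qed

definition geom_bounded :: "(nat \<Rightarrow> complex) \<Rightarrow> bool" where
  "geom_bounded c \<longleftrightarrow> (\<exists>C R. 0 \<le> C \<and> 0 \<le> R \<and> (\<forall>n. norm (c n) \<le> C * R ^ n))"

lemma geom_bounded_power: "geom_bounded (\<lambda>n. z ^ n)"
  unfolding geom_bounded_def by (intro exI[of _ 1] exI[of _ "norm z"]) (auto simp: norm_power)

definition cauchy_prod :: "(nat \<Rightarrow> complex) \<Rightarrow> (nat \<Rightarrow> complex) \<Rightarrow> nat \<Rightarrow> complex" where
  "cauchy_prod a b n = (\<Sum>k\<le>n. a k * b (n - k))"

lemma geom_bounded_cauchy_prod:
  assumes "geom_bounded a" and "geom_bounded b"
  shows "geom_bounded (cauchy_prod a b)"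
proof -
  obtain C R where C: "0 \<le> C" and R: "0 \<le> R" and a: "\<And>n. norm (a n) \<le> C * R ^ n"
    using assms(1) by (auto simp: geom_bounded_def)
  obtain C' R' where C': "0 \<le> C'" and R': "0 \<le> R'" and b: "\<And>n. norm (b n) \<le> C' * R' ^ n"
    using assms(2) by (auto simp: geom_bounded_def)
  define Q where "Q = max R R'"
  have "R \<le> Q" "R' \<le> Q"
    by (simp_all add: Q_def)
  hence a': "norm (a n) \<le> C * Q ^ n" and b': "norm (b n) \<le> C' * Q ^ n" for n
    using a[of n] b[of n] power_mono[of R Q n] power_mono[of R' Q n] C C' R R'
    by (meson mult_left_mono order.trans)+
  have "norm (cauchy_prod a b n) \<le> (C * C') * (2 * Q) ^ n" for n
  proof -
    have "norm (cauchy_prod a b n) \<le> (\<Sum>k\<le>n. norm (a k) * norm (b (n - k)))"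
      unfolding cauchy_prod_def by (rule order.trans[OF norm_sum]) (simp add: norm_mult)
    also have "\<dots> \<le> (\<Sum>k\<le>n. (C * Q ^ k) * (C' * Q ^ (n - k)))"
      using C C' R by (intro sum_mono mult_mono a' b') (auto simp: Q_def)
    also have "\<dots> = (C * C') * (real (Suc n) * Q ^ n)"
      by (simp add: power_add[symmetric] mult_ac)
    also have "\<dots> \<le> (C * C') * (2 ^ n * Q ^ n)"
    proof -
      have "real (Suc n) \<le> 2 ^ n"
        using less_exp[of n] by (metis Suc_leI of_nat_le_iff of_nat_numeral of_nat_power)
      thus ?thesis
        using C C' R by (intro mult_left_mono mult_right_mono) (auto simp: Q_def)
    qed
    finally show ?thesis
      by (simp add: power_mult_distrib)
  qed
  thus ?thesis
    unfolding geom_bounded_def using C C' R by (intro exI[of _ "C * C'"] exI[of _ "2 * Q"]) (auto simp: Q_def)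
qed

definition ml_series :: "complex \<Rightarrow> complex \<Rightarrow> (nat \<Rightarrow> complex) \<Rightarrow> complex \<Rightarrow> complex" where
  "ml_series v d c z = (\<Sum>n. c n * z ^ n / Gamma (v * of_nat n + d))"

lemma mittag_leffler_eq_ml_series: "mittag_leffler v d (e * z) = ml_series v d (\<lambda>n. e ^ n) z"
  by (simp add: mittag_leffler_def ml_series_def power_mult_distrib)

lemma summable_norm_ml_series:
  assumes c: "geom_bounded c" and v: "Re v > 0" and d: "Re d > 0"
  shows "summable (\<lambda>n. norm (c n * z ^ n / Gamma (v * of_nat n + d)))"
proof -
  obtain C R where C: "0 \<le> C" and R: "0 \<le> R" and c_le: "\<And>n. norm (c n) \<le> C * R ^ n"
    using c by (auto simp: geom_bounded_def)
  have "summable (\<lambda>n. C * ((R * norm z) ^ n / norm (Gamma (v * of_nat n + d))))"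
    using R by (intro summable_mult summable_power_div_norm_Gamma v d) auto
  thus ?thesis
  proof (rule summable_comparison_test')
    fix n
    have "norm (c n * z ^ n / Gamma (v * of_nat n + d)) \<le>
            C * R ^ n * norm z ^ n / norm (Gamma (v * of_nat n + d))"
      unfolding norm_divide norm_mult norm_power by (intro divide_right_mono mult_right_mono c_le) auto
    thus "norm (norm (c n * z ^ n / Gamma (v * of_nat n + d))) \<le>
            C * ((R * norm z) ^ n / norm (Gamma (v * of_nat n + d)))"
      by (simp add: power_mult_distrib mult_ac)
  qed
qed

section \<open>Convolution of Mittag-Leffler kernels\<close>

definition rl_kernel :: "complex \<Rightarrow> real \<Rightarrow> complex" where
  "rl_kernel a x = of_real x powr (a - 1) / Gamma a"

lemma rl_kernel_conv_eq_beta_kernel: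
  "indicator {0<..<t} x *\<^sub>R (rl_kernel a (t - x) * rl_kernel b x) =
     beta_kernel a b t x / (Gamma a * Gamma b)"
  by (simp add: rl_kernel_def beta_kernel_def scaleR_conv_of_real)

lemma integral_rl_kernel_conv:
  assumes a: "Re a > 0" and b: "Re b > 0" and t: "t > 0"
  shows "integrable lborel (\<lambda>x. indicator {0<..<t} x *\<^sub>R (rl_kernel a (t - x) * rl_kernel b x))"
    and "(\<integral>x. indicator {0<..<t} x *\<^sub>R (rl_kernel a (t - x) * rl_kernel b x) \<partial>lborel) =
           rl_kernel (a + b) t"
proof -
  show "integrable lborel (\<lambda>x. indicator {0<..<t} x *\<^sub>R (rl_kernel a (t - x) * rl_kernel b x))"
    unfolding rl_kernel_conv_eq_beta_kernel by (intro integrable_divide integrable_beta_kernel a b)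
  have "Gamma a \<noteq> 0" "Gamma b \<noteq> 0" "Gamma (a + b) \<noteq> 0"
    using a b by (auto intro!: Gamma_nonzero_Re_pos)
  thus "(\<integral>x. indicator {0<..<t} x *\<^sub>R (rl_kernel a (t - x) * rl_kernel b x) \<partial>lborel) =
          rl_kernel (a + b) t"
    unfolding rl_kernel_conv_eq_beta_kernel integral_divide_zero
    using a b t by (simp add: integral_beta_kernel Beta_def rl_kernel_def)
qed

lemma integral_norm_rl_kernel_conv:
  assumes a: "Re a > 0" and b: "Re b > 0" and t: "t > 0"
  shows "(\<integral>x. norm (indicator {0<..<t} x *\<^sub>R (rl_kernel a (t - x) * rl_kernel b x)) \<partial>lborel) =
           t powr (Re a + Re b - 1) * Beta (Re a) (Re b) / (norm (Gamma a) * norm (Gamma b))"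
  unfolding rl_kernel_conv_eq_beta_kernel using a b t
  by (simp add: norm_divide norm_mult integral_norm_beta_kernel)

lemma integral_norm_rl_kernel_conv_ml_le:
  assumes v: "Re v \<ge> 0" and d1: "Re d1 > 0" and d2: "Re d2 > 0" and t: "t > 0"
  shows "(\<integral>x. norm (indicator {0<..<t} x *\<^sub>R
                    (rl_kernel (v * of_nat k + d1) (t - x) * rl_kernel (v * of_nat j + d2) x)) \<partial>lborel) \<le>
           t powr (Re d1 + Re d2 - 1) * Beta (Re d1) (Re d2) *
           ((t powr Re v) ^ k / norm (Gamma (v * of_nat k + d1))) *
           ((t powr Re v) ^ j / norm (Gamma (v * of_nat j + d2)))"
    (is "?I \<le> ?C * (?T ^ k / norm ?G1) * (?T ^ j / norm ?G2)")
proof -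
  have "t powr (Re (v * of_nat k + d1) + Re (v * of_nat j + d2) - 1) =
          t powr (Re d1 + Re d2 - 1) * ?T ^ k * ?T ^ j"
    using t by (simp add: powr_power powr_add[symmetric] algebra_simps)
  hence "?I = t powr (Re d1 + Re d2 - 1) * ?T ^ k * ?T ^ j *
                Beta (Re (v * of_nat k + d1)) (Re (v * of_nat j + d2)) / (norm ?G1 * norm ?G2)"
    using v d1 d2 t by (subst integral_norm_rl_kernel_conv) (simp_all add: add_nonneg_pos)
  also have "\<dots> \<le> t powr (Re d1 + Re d2 - 1) * ?T ^ k * ?T ^ j * Beta (Re d1) (Re d2) /
                    (norm ?G1 * norm ?G2)"
    using v d1 d2 by (intro divide_right_mono mult_left_mono Beta_real_mono) auto
  also have "\<dots> = ?C * (?T ^ k / norm ?G1) * (?T ^ j / norm ?G2)"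
    by (simp add: mult_ac)
  finally show ?thesis .
qed

lemma integral_rl_kernel_conv_diagonal:
  assumes "Re v \<ge> 0" "Re d1 > 0" "Re d2 > 0" "t > 0" "k \<le> n"
  shows "(\<integral>x. indicator {0<..<t} x *\<^sub>R
                (rl_kernel (v * of_nat k + d1) (t - x) * rl_kernel (v * of_nat (n - k) + d2) x) \<partial>lborel) =
           rl_kernel (v * of_nat n + (d1 + d2)) t"
proof -
  have "v * of_nat n + (d1 + d2) = (v * of_nat k + d1) + (v * of_nat (n - k) + d2)"
    using assms(5) by (simp add: of_nat_diff algebra_simps)
  thus ?thesis
    using assms(1-4) by (simp only:) (intro integral_rl_kernel_conv(2); simp add: add_nonneg_pos)
qed

definition ml_kernel :: "complex \<Rightarrow> complex \<Rightarrow> (nat \<Rightarrow> complex) \<Rightarrow> real \<Rightarrow> complex" where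
  "ml_kernel v d c x = (\<Sum>k. c k * rl_kernel (v * of_nat k + d) x)"

lemma rl_kernel_ml_term:
  assumes "x \<ge> 0"
  shows "c * rl_kernel (v * of_nat k + d) x =
           of_real x powr (d - 1) * (c * (of_real x powr v) ^ k / Gamma (v * of_nat k + d))"
proof (cases "x = 0")
  case False
  hence "(of_real x powr v) ^ k = (of_real x :: complex) powr (of_nat k * v)"
    by (intro powr_power) simp
  moreover have "(of_real x :: complex) powr (d - 1) * of_real x powr (of_nat k * v) =
                   of_real x powr (v * of_nat k + d - 1)"
    by (simp add: powr_add[symmetric] algebra_simps)
  ultimately show ?thesis
    by (simp add: rl_kernel_def field_simps)
qed (simp add: rl_kernel_def)

lemma summable_norm_ml_kernel:
  assumes "geom_bounded c" "Re v > 0" "Re d > 0" "x \<ge> 0"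
  shows "summable (\<lambda>k. norm (c k * rl_kernel (v * of_nat k + d) x))"
  unfolding rl_kernel_ml_term[OF assms(4)] norm_mult
  by (intro summable_mult summable_norm_ml_series assms(1-3))

lemma ml_kernel_eq_ml_series:
  assumes "geom_bounded c" "Re v > 0" "Re d > 0" "x \<ge> 0"
  shows "ml_kernel v d c x = of_real x powr (d - 1) * ml_series v d c (of_real x powr v)"
  unfolding ml_kernel_def ml_series_def rl_kernel_ml_term[OF assms(4)]
  by (rule suminf_mult, rule summable_norm_cancel, rule summable_norm_ml_series[OF assms(1-3)])

lemma integral_suminf_cauchy_product:
  fixes f g :: "nat \<Rightarrow> 'a \<Rightarrow> complex"
  assumes f: "\<And>x. summable (\<lambda>k. norm (f k x))" and g: "\<And>x. summable (\<lambda>j. norm (g j x))"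
    and fg: "\<And>k j. integrable M (\<lambda>x. f k x * g j x)"
    and bound: "\<And>k j. (\<integral>x. norm (f k x * g j x) \<partial>M) \<le> p k * q j"
    and p: "summable p" "\<And>k. p k \<ge> 0" and q: "summable q" "\<And>j. q j \<ge> 0"
  shows "integrable M (\<lambda>x. (\<Sum>k. f k x) * (\<Sum>j. g j x))"
    and "(\<integral>x. (\<Sum>k. f k x) * (\<Sum>j. g j x) \<partial>M) = (\<Sum>n. \<Sum>k\<le>n. \<integral>x. f k x * g (n - k) x \<partial>M)"
proof -
  define H where "H n x = (\<Sum>k\<le>n. f k x * g (n - k) x)" for n x
  have H_integrable: "integrable M (H n)" for n
    unfolding H_def by (intro Bochner_Integration.integrable_sum fg)
  have "(\<lambda>n. H n x) sums ((\<Sum>k. f k x) * (\<Sum>j. g j x))" for x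
    unfolding H_def by (rule Cauchy_product_sums[OF f g])
  hence suminf_H: "(\<lambda>x. \<Sum>n. H n x) = (\<lambda>x. (\<Sum>k. f k x) * (\<Sum>j. g j x))"
    by (auto simp: fun_eq_iff sums_iff)
  have norm_H_le: "norm (H n x) \<le> (\<Sum>k\<le>n. norm (f k x) * norm (g (n - k) x))" for n x
    unfolding H_def by (rule order.trans[OF norm_sum]) (simp add: norm_mult)
  have "summable (\<lambda>n. norm (H n x))" for x
  proof (rule summable_comparison_test'[where N = 0])
    show "summable (\<lambda>n. \<Sum>k\<le>n. norm (f k x) * norm (g (n - k) x))"
      using f g by (intro summable_Cauchy_product) simp_all
  qed (simp add: norm_H_le)
  hence H_summable: "AE x in M. summable (\<lambda>n. norm (H n x))"
    by simp
  have integral_norm_H_le: "(\<integral>x. norm (H n x) \<partial>M) \<le> (\<Sum>k\<le>n. p k * q (n - k))" for n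
  proof -
    have "(\<integral>x. norm (H n x) \<partial>M) \<le> (\<integral>x. (\<Sum>k\<le>n. norm (f k x * g (n - k) x)) \<partial>M)"
      using norm_H_le by (intro integral_mono integrable_norm H_integrable Bochner_Integration.integrable_sum fg)
                         (simp_all add: norm_mult)
    also have "\<dots> \<le> (\<Sum>k\<le>n. p k * q (n - k))"
      using bound fg by (simp add: sum_mono)
    finally show ?thesis .
  qed
  have "summable (\<lambda>n. \<integral>x. norm (H n x) \<partial>M)"
  proof (rule summable_comparison_test'[where N = 0])
    show "summable (\<lambda>n. \<Sum>k\<le>n. p k * q (n - k))"
      using summable_Cauchy_product[of p q] p q by simp
  qed (simp add: integral_norm_H_le)
  note H_suminf = H_integrable H_summable this
  show "integrable M (\<lambda>x. (\<Sum>k. f k x) * (\<Sum>j. g j x))"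
    using integrable_suminf[OF H_suminf] unfolding suminf_H .
  show "(\<integral>x. (\<Sum>k. f k x) * (\<Sum>j. g j x) \<partial>M) = (\<Sum>n. \<Sum>k\<le>n. \<integral>x. f k x * g (n - k) x \<partial>M)"
    using integral_suminf[OF H_suminf] fg unfolding suminf_H by (simp add: H_def)
qed

lemma integral_conv_ml_kernel:
  assumes v: "Re v > 0" and d1: "Re d1 > 0" and d2: "Re d2 > 0"
    and a: "geom_bounded a" and b: "geom_bounded b" and t: "t > 0"
  shows "integrable lborel
           (\<lambda>x. indicator {0<..<t} x *\<^sub>R (ml_kernel v d1 a (t - x) * ml_kernel v d2 b x))"
    and "(\<integral>x. indicator {0<..<t} x *\<^sub>R (ml_kernel v d1 a (t - x) * ml_kernel v d2 b x) \<partial>lborel) =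
           ml_kernel v (d1 + d2) (cauchy_prod a b) t"
proof -
  define K where "K k j x = indicator {0<..<t} x *\<^sub>R
                    (rl_kernel (v * of_nat k + d1) (t - x) * rl_kernel (v * of_nat j + d2) x)" for k j x
  define f where "f k x = indicator {0<..<t} x *\<^sub>R (a k * rl_kernel (v * of_nat k + d1) (t - x))" for k x
  define g where "g j x = indicator {0<..<t} x *\<^sub>R (b j * rl_kernel (v * of_nat j + d2) x)" for j x
  have fg: "f k x * g j x = a k * b j * K k j x" for k j x
    by (simp add: f_def g_def K_def indicator_def)
  have f_summable: "summable (\<lambda>k. norm (f k x))" for x
    using summable_norm_ml_kernel[OF a v d1, of "t - x"] by (cases "0 < x \<and> x < t") (simp_all add: f_def)
  have g_summable: "summable (\<lambda>j. norm (g j x))" for x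
    using summable_norm_ml_kernel[OF b v d2, of x] by (cases "0 < x \<and> x < t") (simp_all add: g_def)
  have fg_integrable: "integrable lborel (\<lambda>x. f k x * g j x)" for k j
    unfolding fg K_def using v d1 d2 t
    by (intro integrable_mult_right integral_rl_kernel_conv(1)) (simp_all add: add_nonneg_pos)
  define p where "p k = t powr (Re d1 + Re d2 - 1) * Beta (Re d1) (Re d2) *
                          norm (a k * of_real (t powr Re v) ^ k / Gamma (v * of_nat k + d1))" for k
  define q where "q j = norm (b j * of_real (t powr Re v) ^ j / Gamma (v * of_nat j + d2))" for j
  have p: "summable p" "p k \<ge> 0" for k
    unfolding p_def using d1 d2 by (auto intro!: summable_mult summable_norm_ml_series a v simp: Beta_def)
  have q: "summable q" "q j \<ge> 0" for j
    unfolding q_def by (auto intro!: summable_norm_ml_series b v d2)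
  have fg_bound: "(\<integral>x. norm (f k x * g j x) \<partial>lborel) \<le> p k * q j" for k j
  proof -
    have "(\<integral>x. norm (f k x * g j x) \<partial>lborel) = norm (a k * b j) * (\<integral>x. norm (K k j x) \<partial>lborel)"
      unfolding fg norm_mult by simp
    also have "\<dots> \<le> norm (a k * b j) * (t powr (Re d1 + Re d2 - 1) * Beta (Re d1) (Re d2) *
                   ((t powr Re v) ^ k / norm (Gamma (v * of_nat k + d1))) *
                   ((t powr Re v) ^ j / norm (Gamma (v * of_nat j + d2))))"
      unfolding K_def using v d1 d2 t by (intro mult_left_mono integral_norm_rl_kernel_conv_ml_le) simp_all
    also have "\<dots> = p k * q j"
      by (simp add: p_def q_def norm_mult norm_divide norm_power)
    finally show ?thesis .
  qed
  have suminf_fg: "(\<Sum>k. f k x) * (\<Sum>j. g j x) =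
                     indicator {0<..<t} x *\<^sub>R (ml_kernel v d1 a (t - x) * ml_kernel v d2 b x)" for x
    by (cases "0 < x \<and> x < t") (simp_all add: f_def g_def ml_kernel_def)
  note series = integral_suminf_cauchy_product[OF f_summable g_summable fg_integrable fg_bound p q,
                  unfolded suminf_fg]
  show "integrable lborel
          (\<lambda>x. indicator {0<..<t} x *\<^sub>R (ml_kernel v d1 a (t - x) * ml_kernel v d2 b x))"
    by (rule series(1))
  have "(\<integral>x. K k (n - k) x \<partial>lborel) = rl_kernel (v * of_nat n + (d1 + d2)) t" if "k \<le> n" for k n
    unfolding K_def using v d1 d2 t that by (intro integral_rl_kernel_conv_diagonal) simp_all
  hence "(\<Sum>k\<le>n. \<integral>x. f k x * g (n - k) x \<partial>lborel) =
           cauchy_prod a b n * rl_kernel (v * of_nat n + (d1 + d2)) t" for n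
    by (simp add: fg cauchy_prod_def sum_distrib_right)
  thus "(\<integral>x. indicator {0<..<t} x *\<^sub>R (ml_kernel v d1 a (t - x) * ml_kernel v d2 b x) \<partial>lborel) =
          ml_kernel v (d1 + d2) (cauchy_prod a b) t"
    unfolding series(2) by (simp add: ml_kernel_def)
qed

lemma conv_ml_kernel:
  assumes v: "Re v > 0" and d1: "Re d1 > 0" and d2: "Re d2 > 0"
    and a: "geom_bounded a" and b: "geom_bounded b" and t: "t \<ge> 0"
    and f: "\<And>x. 0 \<le> x \<Longrightarrow> x \<le> t \<Longrightarrow> f x = ml_kernel v d1 a x"
    and g: "\<And>x. 0 \<le> x \<Longrightarrow> x \<le> t \<Longrightarrow> g x = ml_kernel v d2 b x"
  shows "conv f g t = ml_kernel v (d1 + d2) (cauchy_prod a b) t"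
proof (cases "t = 0")
  case True
  thus ?thesis
    by (simp add: conv_def ml_kernel_def rl_kernel_def)
next
  case False
  hence t: "t > 0"
    using t by simp
  have "conv f g t = integral {0<..<t} (\<lambda>x. f (t - x) * g x)"
    unfolding conv_def by (rule integral_open_interval_real)
  also have "\<dots> = integral {0<..<t} (\<lambda>x. ml_kernel v d1 a (t - x) * ml_kernel v d2 b x)"
    by (rule integral_cong) (simp add: f g)
  also have "\<dots> = (LINT x:{0<..<t}|lborel. ml_kernel v d1 a (t - x) * ml_kernel v d2 b x)"
    using integral_conv_ml_kernel(1)[OF v d1 d2 a b t]
    by (intro set_borel_integral_eq_integral(2)[symmetric]) (simp add: set_integrable_def)
  also have "\<dots> = ml_kernel v (d1 + d2) (cauchy_prod a b) t"
    unfolding set_lebesgue_integral_def by (rule integral_conv_ml_kernel(2)[OF v d1 d2 a b t])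
  finally show ?thesis .
qed

section \<open>Iterated convolution and divided differences\<close>

fun cauchy_prod_iter :: "(nat \<Rightarrow> nat \<Rightarrow> complex) \<Rightarrow> nat \<Rightarrow> nat \<Rightarrow> complex" where
  "cauchy_prod_iter c 0 = (\<lambda>n. 0)"
| "cauchy_prod_iter c (Suc 0) = c 1"
| "cauchy_prod_iter c (Suc (Suc m)) = cauchy_prod (cauchy_prod_iter c (Suc m)) (c (Suc (Suc m)))"

lemma geom_bounded_cauchy_prod_iter:
  "(\<And>i. i \<in> {1..m} \<Longrightarrow> geom_bounded (c i)) \<Longrightarrow> geom_bounded (cauchy_prod_iter c m)"
proof (induction c m rule: cauchy_prod_iter.induct)
  case (1 c)
  show ?case
    unfolding geom_bounded_def by (intro exI[of _ 0]) simp
next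
  case (3 c m)
  thus ?case
    by (simp add: geom_bounded_cauchy_prod)
qed simp

lemma conv_iter_ml_kernel:
  assumes v: "Re v > 0" and m: "m \<ge> 1"
    and d: "\<And>i. i \<in> {1..m} \<Longrightarrow> Re (d i) > 0"
    and c: "\<And>i. i \<in> {1..m} \<Longrightarrow> geom_bounded (c i)"
    and F: "\<And>i x. i \<in> {1..m} \<Longrightarrow> x \<ge> 0 \<Longrightarrow> F i x = ml_kernel v (d i) (c i) x"
    and t: "t \<ge> 0"
  shows "conv_iter F m t = ml_kernel v (\<Sum>i=1..m. d i) (cauchy_prod_iter c m) t"
  using m d c F t
proof (induction m arbitrary: t rule: nat_induct_at_least)
  case base
  thus ?case
    by simp
next
  case (Suc m)
  then obtain k where k: "m = Suc k"
    by (cases m) auto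
  have "Re (\<Sum>i=1..m. d i) > 0"
    unfolding Re_sum using Suc by (intro sum_pos) auto
  moreover have "geom_bounded (cauchy_prod_iter c m)"
    using Suc by (intro geom_bounded_cauchy_prod_iter) auto
  moreover have "conv_iter F m x = ml_kernel v (\<Sum>i=1..m. d i) (cauchy_prod_iter c m) x" if "x \<ge> 0" for x
    using Suc that by (intro Suc.IH) auto
  ultimately have "conv (conv_iter F m) (F (Suc m)) t =
                     ml_kernel v ((\<Sum>i=1..m. d i) + d (Suc m))
                       (cauchy_prod (cauchy_prod_iter c m) (c (Suc m))) t"
    using Suc v by (intro conv_ml_kernel) auto
  thus ?case
    by (simp add: k)
qed

text \<open>The divided difference of \<open>z ^ r\<close> at the nodes \<open>e i\<close>, \<open>i \<in> A\<close>, i.e. the complete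
  homogeneous symmetric polynomial of degree \<open>r + 1 - card A\<close> in these nodes.\<close>
definition divdiff_power :: "(nat \<Rightarrow> complex) \<Rightarrow> nat set \<Rightarrow> nat \<Rightarrow> complex" where
  "divdiff_power e A r = (\<Sum>i\<in>A. e i ^ r / (\<Prod>j\<in>A - {i}. (e i - e j)))"

lemma divdiff_power_Suc:
  assumes A: "finite A" "c \<in> A" "inj_on e A"
  shows "divdiff_power e A (Suc r) = e c * divdiff_power e A r + divdiff_power e (A - {c}) r"
proof -
  have "divdiff_power e A (Suc r) - e c * divdiff_power e A r =
          (\<Sum>i\<in>A. e i ^ r * (e i - e c) / (\<Prod>j\<in>A - {i}. (e i - e j)))"
    unfolding divdiff_power_def
    by (simp add: sum_distrib_left sum_subtractf[symmetric] algebra_simps diff_divide_distrib)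
  also have "\<dots> = (\<Sum>i\<in>A - {c}. e i ^ r * (e i - e c) / (\<Prod>j\<in>A - {i}. (e i - e j)))"
    using A by (subst sum.remove[of A c]) auto
  also have "\<dots> = divdiff_power e (A - {c}) r"
    unfolding divdiff_power_def
  proof (intro sum.cong refl)
    fix i assume i: "i \<in> A - {c}"
    have "e i - e c \<noteq> 0"
      using i A inj_onD[OF A(3), of i c] by auto
    moreover have "(\<Prod>j\<in>A - {i}. (e i - e j)) = (e i - e c) * (\<Prod>j\<in>A - {c} - {i}. (e i - e j))"
      using A i by (subst prod.remove[of _ c]) (auto intro!: prod.cong)
    ultimately show "e i ^ r * (e i - e c) / (\<Prod>j\<in>A - {i}. (e i - e j)) =
                       e i ^ r / (\<Prod>j\<in>A - {c} - {i}. (e i - e j))"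
      by simp
  qed
  finally show ?thesis
    by (simp add: algebra_simps)
qed

lemma divdiff_power_degree:
  "finite A \<Longrightarrow> card A = Suc n \<Longrightarrow> inj_on e A \<Longrightarrow>
     divdiff_power e A n = 1 \<and> (\<forall>r<n. divdiff_power e A r = 0)"
proof (induction n arbitrary: A)
  case 0
  then obtain a where "A = {a}"
    using card_1_singletonE by (metis One_nat_def)
  thus ?case
    by (simp add: divdiff_power_def)
next
  case (Suc n)
  then obtain a b where ab: "a \<in> A" "b \<in> A" "a \<noteq> b"
    by (metis card_le_Suc_iff Suc_n_not_le_n le_refl insertCI)
  have IH: "divdiff_power e (A - {x}) n = 1" "\<forall>r<n. divdiff_power e (A - {x}) r = 0" if "x \<in> A" for x
    using Suc.IH[of "A - {x}"] Suc.prems that by (auto intro: inj_on_subset)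
  have vanish: "divdiff_power e A r = 0" if "r \<le> n" for r
  proof -
    have "(e a - e b) * divdiff_power e A r = divdiff_power e (A - {b}) r - divdiff_power e (A - {a}) r"
      using divdiff_power_Suc[OF Suc.prems(1) ab(1) Suc.prems(3), of r]
            divdiff_power_Suc[OF Suc.prems(1) ab(2) Suc.prems(3), of r]
      by (simp add: algebra_simps)
    also have "\<dots> = 0"
      using IH[OF ab(1)] IH[OF ab(2)] that by (cases "r = n") auto
    finally show ?thesis
      using inj_onD[OF Suc.prems(3) _ ab(1,2)] ab(3) by auto
  qed
  have "divdiff_power e A (Suc n) = e a * divdiff_power e A n + divdiff_power e (A - {a}) n"
    by (rule divdiff_power_Suc[OF Suc.prems(1) ab(1) Suc.prems(3)])
  thus ?case
    using vanish IH[OF ab(1)] by simp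
qed

lemma cauchy_prod_geometric_Suc:
  "cauchy_prod h (\<lambda>n. x ^ n) (Suc n) = x * cauchy_prod h (\<lambda>n. x ^ n) n + h (Suc n)"
proof -
  have "(\<Sum>k\<le>n. h k * x ^ (Suc n - k)) = x * (\<Sum>k\<le>n. h k * x ^ (n - k))"
    by (simp add: sum_distrib_left Suc_diff_le mult_ac)
  thus ?thesis
    by (simp add: cauchy_prod_def)
qed

text \<open>Partial fractions for the power series \<open>\<Prod>i\<in>{1..m}. 1 / (1 - e i X)\<close>.\<close>
lemma cauchy_prod_iter_geometric:
  assumes "inj_on e {1..m}" and "m \<ge> 1"
  shows "cauchy_prod_iter (\<lambda>i n. e i ^ n) m n = divdiff_power e {1..m} (n + m - 1)"
  using assms(2,1)
proof (induction m arbitrary: n rule: nat_induct_at_least)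
  case base
  thus ?case
    by (simp add: divdiff_power_def)
next
  case (Suc m)
  then obtain k where k: "m = Suc k"
    by (cases m) auto
  have inj: "inj_on e {1..m}"
    using Suc.prems by (rule inj_on_subset) auto
  note inj_Suc = Suc.prems and m_ge = Suc.hyps
  have remove: "{1..Suc m} - {Suc m} = {1..m}"
    by auto
  have IH: "cauchy_prod_iter (\<lambda>i n. e i ^ n) m n' = divdiff_power e {1..m} (n' + m - 1)" for n'
    using Suc.IH[OF inj] .
  have rec: "cauchy_prod_iter (\<lambda>i n. e i ^ n) (Suc m) =
               cauchy_prod (cauchy_prod_iter (\<lambda>i n. e i ^ n) m) (\<lambda>n. e (Suc m) ^ n)"
    by (simp add: k)
  show ?case
  proof (induction n)
    case 0
    have "divdiff_power e {1..m} (m - 1) = 1" "divdiff_power e {1..Suc m} m = 1"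
      using divdiff_power_degree[of "{1..m}" "m - 1" e] divdiff_power_degree[of "{1..Suc m}" m e]
            m_ge inj inj_Suc by simp_all
    thus ?case
      using IH[of 0] by (simp add: rec cauchy_prod_def)
  next
    case (Suc n)
    thus ?case
      using IH[of "Suc n"] divdiff_power_Suc[of "{1..Suc m}" "Suc m" e "n + m"]
            inj_Suc m_ge remove
      by (simp add: rec cauchy_prod_geometric_Suc)
  qed
qed

lemma ml_series_linear_combination:
  assumes "Re v > 0" and "Re d > 0"
  shows "ml_series v d (\<lambda>n. \<Sum>i\<in>I. w i * e i ^ n) z = (\<Sum>i\<in>I. w i * mittag_leffler v d (e i * z))"
proof -
  have summable: "summable (\<lambda>n. (e i * z) ^ n / Gamma (v * of_nat n + d))" for i
    using summable_norm_cancel[OF summable_norm_ml_series[OF geom_bounded_power assms, of "e i" z]]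
    by (simp add: power_mult_distrib)
  have "ml_series v d (\<lambda>n. \<Sum>i\<in>I. w i * e i ^ n) z =
          (\<Sum>n. \<Sum>i\<in>I. w i * ((e i * z) ^ n / Gamma (v * of_nat n + d)))"
    unfolding ml_series_def by (simp add: sum_distrib_left sum_divide_distrib power_mult_distrib mult_ac)
  also have "\<dots> = (\<Sum>i\<in>I. \<Sum>n. w i * ((e i * z) ^ n / Gamma (v * of_nat n + d)))"
    using summable by (intro suminf_sum summable_mult)
  also have "\<dots> = (\<Sum>i\<in>I. w i * mittag_leffler v d (e i * z))"
    unfolding mittag_leffler_def by (intro sum.cong refl suminf_mult summable)
  finally show ?thesis .
qed

theorem proposition2p1:
  fixes M :: nat and t :: real and \<nu> :: complex
    and \<delta> \<eta> :: "nat \<Rightarrow> complex"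
  assumes "M \<ge> 1" and "t \<ge> 0"
    and "\<nu> \<noteq> 0" and "Re \<nu> > 0"
    and "\<And>i. i \<in> {1..M} \<Longrightarrow> \<delta> i \<noteq> 0 \<and> Re (\<delta> i) > 0"
    and "inj_on \<eta> {1..M}"
  shows "conv_iter (\<lambda>i x. of_real x powr (\<delta> i - 1) * mittag_leffler \<nu> (\<delta> i) (\<eta> i * of_real x powr \<nu>)) M t
       = of_real t powr ((\<Sum>h=1..M. \<delta> h) - 1) *
         (\<Sum>i=1..M. \<eta> i ^ (M - 1) / (\<Prod>j\<in>{1..M} - {i}. (\<eta> i - \<eta> j))
            * mittag_leffler \<nu> (\<Sum>h=1..M. \<delta> h) (\<eta> i * of_real t powr \<nu>))"
proof -
  \<comment> \<open>The hypotheses \<open>\<nu> \<noteq> 0\<close> and \<open>\<delta> i \<noteq> 0\<close> follow from the positivity of the real parts.\<close>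
  define D where "D = (\<Sum>h=1..M. \<delta> h)"
  let ?c = "\<lambda>i n. \<eta> i ^ n"
  have \<delta>: "Re (\<delta> i) > 0" if "i \<in> {1..M}" for i
    using assms(5) that by blast
  have D: "Re D > 0"
    unfolding D_def Re_sum using \<delta> assms(1) by (intro sum_pos) auto
  have "conv_iter (\<lambda>i x. of_real x powr (\<delta> i - 1) * mittag_leffler \<nu> (\<delta> i) (\<eta> i * of_real x powr \<nu>)) M t =
          ml_kernel \<nu> D (cauchy_prod_iter ?c M) t"
    unfolding D_def using assms(1,2,4) \<delta>
    by (intro conv_iter_ml_kernel)
       (simp_all add: geom_bounded_power ml_kernel_eq_ml_series mittag_leffler_eq_ml_series)
  also have "\<dots> = of_real t powr (D - 1) * ml_series \<nu> D (cauchy_prod_iter ?c M) (of_real t powr \<nu>)"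
    using assms(2,4) D by (intro ml_kernel_eq_ml_series geom_bounded_cauchy_prod_iter geom_bounded_power)
  also have "cauchy_prod_iter ?c M =
               (\<lambda>n. \<Sum>i=1..M. \<eta> i ^ (M - 1) / (\<Prod>j\<in>{1..M} - {i}. (\<eta> i - \<eta> j)) * \<eta> i ^ n)"
    using cauchy_prod_iter_geometric[OF assms(6,1)] assms(1)
    by (simp add: fun_eq_iff divdiff_power_def power_add[symmetric] add.commute)
  also have "ml_series \<nu> D \<dots> (of_real t powr \<nu>) =
               (\<Sum>i=1..M. \<eta> i ^ (M - 1) / (\<Prod>j\<in>{1..M} - {i}. (\<eta> i - \<eta> j))
                  * mittag_leffler \<nu> D (\<eta> i * of_real t powr \<nu>))"
    using assms(4) D by (rule ml_series_linear_combination)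
  finally show ?thesis
    unfolding D_def .
qed

end
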